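(* Assume $q\ge n$ (so $\psi^-:M_{q,n}\to\mathrm{Sym}^n$ is surjective), and let $y$, $x$, $x'$, $Y$, $Z$, $Z_y$, $Z_{x'}$, $S_y$ be as in the context. Then: (i) $Y$ is a single $K_x\times K'_{\mathbb C}$-orbit, generated by $y$; hence $Y\cong(K_x\times K'_{\mathbb C})/S_y$. (ii) There is a group homomorphism $\beta:K_x\to K'_{x'}$ such that $S_y=\{(k,\beta(k)):k\in K_x\}$. (iii) There is a bijection $T:Z_y\to Z_{x'}$ commuting with the action of $K^t_{\mathbb C}=\mathrm O(t,\mathbb C)$ and satisfying $T((k,\beta(k))\cdot z)=\beta(k)\cdot T(z)$ for all $z\in Z_y$ and $k\in K_x$.
   Context: Let $p,q,t,n$ satisfy $p+q+t$ even, $\min(p,q+t)\ge2n$, $\max(p,q+t)>2n$. $K_{\mathbb C}=\mathrm O(p,\mathbb C)\times\mathrm O(q,\mathbb C)$, $K^t_{\mathbb C}=\mathrm O(t,\mathbb C)$, $K'_{\mathbb C}=\mathrm{GL}(n,\mathbb C)$. $W_H=M_{p,n}\oplus M_{q,n}\oplus M_{t,n}\ni(w^+;w_1,w_2)$, $W=M_{p,n}\oplus M_{q,n}$, ${\rm pr}(w^+;w_1,w_2)=(w^+;w_1)$. Actions: $(o_p,o_q,o_t,g)\cdot(w^+;w_1,w_2)=(o_pw^+g^{-1};o_qw_1g^T,o_tw_2g^T)$. Maps: $\phi(w^+;w_1)=w^+w_1^T\in M_{p,q}$, $\psi^+(w^+)=(w^+)^Tw^+$, $\psi^-(w_1)=w_1^Tw_1$,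 $\psi_2(w_2)=w_2^Tw_2$. $K_{\mathbb C}$ acts on $M_{p,q}$ by $(o_p,o_q)\cdot m=o_pmo_q^T$ and $K'_{\mathbb C}$ on $\mathrm{Sym}^n$ by $g\cdot s=gsg^T$. Null cone $\overline{\mathcal N}=\{\psi^+(w^+)=0,\ \psi^-(w_1)+\psi_2(w_2)=0\}$. For $m\ge 2n$ let $E_{m,n}$ be the $m\times n$ matrix with block rows $I_n$, $0_{(m-2n)\times n}$, $iI_n$. Put $z_0=(E_{p,n};E_{q+t,n})\in\overline{\mathcal N}$ (with $E_{q+t,n}$ split into its first $q$ and last $t$ rows), $y=(y^+;y^-)={\rm pr}(z_0)$, $x=\phi(y)$, $x'=-\psi^-(y^-)$. $K_x$, $K'_{x'}$ are the stabilizers of $x$ in $K_{\mathbb C}$ and of $x'$ in $K'_{\mathbb C}$; $S_y$ is the stabilizer of $y$ in $K_{\mathbb C}\times K'_{\mathbb C}$. $Y=\phi^{-1}(x)\cap{\rm pr}(\overline{\mathcal N})$, $Z=\{z\in\overline{\mathcal N}:\phi({\rm pr}(z))=x\}$, $Z_y=\{z\in Z:{\rm pr}(z)=y\}$, $Z_{x'}=\psi_2^{-1}(x')\subseteq M_{t,n}$. *)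

theory Defs
  imports Complex_Main "Jordan_Normal_Form.Matrix"
begin

text \<open>Complex matrices are represented by the Jordan_Normal_Form type complex mat;
  M_{a,b} is carrier_mat a b.\<close>

type_synonym cmat = "complex mat"

definition orth_grp :: "nat \<Rightarrow> cmat set" where
  "orth_grp m = {u \<in> carrier_mat m m. transpose_mat u * u = 1\<^sub>m m}"

definition gl_grp :: "nat \<Rightarrow> cmat set" where
  "gl_grp n = {g \<in> carrier_mat n n. invertible_mat g}"

definition minv :: "cmat \<Rightarrow> cmat" where
  "minv g = (SOME h. h \<in> carrier_mat (dim_row g) (dim_row g) \<and>
                     g * h = 1\<^sub>m (dim_row g) \<and> h * g = 1\<^sub>m (dim_row g))"

text \<open>The matrix E_{m,n}: block rows I_n, 0_{(m-2n) x n}, i I_n.\<close>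
definition E_mat :: "nat \<Rightarrow> nat \<Rightarrow> cmat" where
  "E_mat m n = mat m n (\<lambda>(i,j).
      if i < n then (if i = j then 1 else 0)
      else if m - n \<le> i then (if i - (m - n) = j then \<i> else 0)
      else 0)"

definition top_rows :: "nat \<Rightarrow> cmat \<Rightarrow> cmat" where
  "top_rows k A = mat k (dim_col A) (\<lambda>(i,j). A $$ (i,j))"

definition bot_rows :: "nat \<Rightarrow> cmat \<Rightarrow> cmat" where
  "bot_rows k A = mat k (dim_col A) (\<lambda>(i,j). A $$ (dim_row A - k + i, j))"

definition W_sp :: "nat \<Rightarrow> nat \<Rightarrow> nat \<Rightarrow> (cmat \<times> cmat) set" where
  "W_sp p q n = carrier_mat p n \<times> carrier_mat q n"

definition WH_sp :: "nat \<Rightarrow> nat \<Rightarrow> nat \<Rightarrow> nat \<Rightarrow> (cmat \<times> cmat \<times> cmat) set" where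
  "WH_sp p q t n = carrier_mat p n \<times> carrier_mat q n \<times> carrier_mat t n"

definition pr :: "cmat \<times> cmat \<times> cmat \<Rightarrow> cmat \<times> cmat" where
  "pr z = (case z of (wp, w1, w2) \<Rightarrow> (wp, w1))"

definition phi :: "cmat \<times> cmat \<Rightarrow> cmat" where
  "phi w = (case w of (wp, w1) \<Rightarrow> wp * transpose_mat w1)"

definition psi :: "cmat \<Rightarrow> cmat" where
  "psi w = transpose_mat w * w"

text \<open>Groups K_C = O(p) x O(q), K^t_C = O(t), K'_C = GL(n).\<close>
definition K_grp :: "nat \<Rightarrow> nat \<Rightarrow> (cmat \<times> cmat) set" where
  "K_grp p q = orth_grp p \<times> orth_grp q"

definition act_W :: "(cmat \<times> cmat) \<times> cmat \<Rightarrow> cmat \<times> cmat \<Rightarrow> cmat \<times> cmat" where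
  "act_W kg w = (case kg of ((op, oq), g) \<Rightarrow> case w of (wp, w1) \<Rightarrow>
      (op * wp * minv g, oq * w1 * transpose_mat g))"

definition act_WH :: "cmat \<times> cmat \<times> cmat \<times> cmat \<Rightarrow> cmat \<times> cmat \<times> cmat \<Rightarrow> cmat \<times> cmat \<times> cmat" where
  "act_WH a z = (case a of (op, oq, ot, g) \<Rightarrow> case z of (wp, w1, w2) \<Rightarrow>
      (op * wp * minv g, oq * w1 * transpose_mat g, ot * w2 * transpose_mat g))"

definition null_cone :: "nat \<Rightarrow> nat \<Rightarrow> nat \<Rightarrow> nat \<Rightarrow> (cmat \<times> cmat \<times> cmat) set" where
  "null_cone p q t n = {(wp, w1, w2) \<in> WH_sp p q t n.
      psi wp = 0\<^sub>m n n \<and> psi w1 + psi w2 = 0\<^sub>m n n}"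

definition z0 :: "nat \<Rightarrow> nat \<Rightarrow> nat \<Rightarrow> nat \<Rightarrow> cmat \<times> cmat \<times> cmat" where
  "z0 p q t n = (E_mat p n, top_rows q (E_mat (q + t) n), bot_rows t (E_mat (q + t) n))"

definition y_pt :: "nat \<Rightarrow> nat \<Rightarrow> nat \<Rightarrow> nat \<Rightarrow> cmat \<times> cmat" where
  "y_pt p q t n = pr (z0 p q t n)"

definition x_pt :: "nat \<Rightarrow> nat \<Rightarrow> nat \<Rightarrow> nat \<Rightarrow> cmat" where
  "x_pt p q t n = phi (y_pt p q t n)"

definition x'_pt :: "nat \<Rightarrow> nat \<Rightarrow> nat \<Rightarrow> nat \<Rightarrow> cmat" where
  "x'_pt p q t n = - psi (snd (y_pt p q t n))"

definition K_x :: "nat \<Rightarrow> nat \<Rightarrow> nat \<Rightarrow> nat \<Rightarrow> (cmat \<times> cmat) set" where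
  "K_x p q t n = {(op, oq) \<in> K_grp p q. op * x_pt p q t n * transpose_mat oq = x_pt p q t n}"

definition K'_x' :: "nat \<Rightarrow> nat \<Rightarrow> nat \<Rightarrow> nat \<Rightarrow> cmat set" where
  "K'_x' p q t n = {g \<in> gl_grp n. g * x'_pt p q t n * transpose_mat g = x'_pt p q t n}"

definition S_y :: "nat \<Rightarrow> nat \<Rightarrow> nat \<Rightarrow> nat \<Rightarrow> ((cmat \<times> cmat) \<times> cmat) set" where
  "S_y p q t n = {kg \<in> K_grp p q \<times> gl_grp n. act_W kg (y_pt p q t n) = y_pt p q t n}"

definition Y_set :: "nat \<Rightarrow> nat \<Rightarrow> nat \<Rightarrow> nat \<Rightarrow> (cmat \<times> cmat) set" where
  "Y_set p q t n = {w \<in> W_sp p q n. phi w = x_pt p q t n} \<inter> pr ` null_cone p q t n"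

definition Z_set :: "nat \<Rightarrow> nat \<Rightarrow> nat \<Rightarrow> nat \<Rightarrow> (cmat \<times> cmat \<times> cmat) set" where
  "Z_set p q t n = {z \<in> null_cone p q t n. phi (pr z) = x_pt p q t n}"

definition Z_y :: "nat \<Rightarrow> nat \<Rightarrow> nat \<Rightarrow> nat \<Rightarrow> (cmat \<times> cmat \<times> cmat) set" where
  "Z_y p q t n = {z \<in> Z_set p q t n. pr z = y_pt p q t n}"

definition Z_x' :: "nat \<Rightarrow> nat \<Rightarrow> nat \<Rightarrow> nat \<Rightarrow> cmat set" where
  "Z_x' p q t n = {w2 \<in> carrier_mat t n. psi w2 = x'_pt p q t n}"

end

theory Submission
  imports Defs "Jordan_Normal_Form.Determinant"
begin

text \<open>
  Write the base point as y = (E, Y), where E = E_{p,n} and Y, B are the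
  first q and the last t rows of E_{q+t,n}.  Everything follows from four facts:
  E has a left inverse L (it contains I_n as its top block), Y has a left inverse P
  (this is where q \<ge> n is used), E is isotropic (E^T E = 0) and Y^T Y + B^T B = 0.
  (i)  If w w1^T = E Y^T then c = w1^T P^T satisfies w c = E, hence c is invertible with
       inverse L w, and (w, w1) = (E c^-1, Y c^T): the fibre of phi is one GL(n)-orbit.
  (ii) For (a, b) in K_x the matrix a maps the column space of E into itself,
       a E = E beta(a, b) with beta(a, b) = L a E; beta is multiplicative, invertible,
       preserves x' = -Y^T Y, and the stabiliser S_y is exactly the graph of beta.
  (iii) Z_y consists of the triples (E, Y, w2) with psi w2 = x', so the projection to
       the last component is the required equivariant bijection T.
\<close>

section \<open>Matrix algebra\<close>

text \<open>Associativity of products with dimension side conditions only; it replaces the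
  library simp rule, whose carrier hypotheses are awkward to discharge here.\<close>

declare assoc_mult_mat[simp del]

lemma mult_assoc_dim:
  "dim_col A = dim_row B \<Longrightarrow> dim_col B = dim_row C \<Longrightarrow> (A * B) * (C :: cmat) = A * (B * C)"
  by (rule assoc_mult_mat[of A "dim_row A" "dim_col A" B "dim_col B" C "dim_col C"]) auto

lemma mult_cancel_left_inverse:
  assumes AB: "A * B = 1\<^sub>m n" and "dim_col B = dim_row X" and "dim_col A = dim_row B"
  shows "A * (B * (X :: cmat)) = X"
proof -
  have "A * (B * X) = (A * B) * X" using assms(2,3) by (simp add: mult_assoc_dim)
  also have "\<dots> = X" using assms by (metis index_mult_mat(3) index_one_mat(3) left_mult_one_mat')
  finally show ?thesis .
qed

lemma transpose_mult_dim:
  "dim_col A = dim_row B \<Longrightarrow> transpose_mat (A * B) = transpose_mat B * transpose_mat (A :: cmat)"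
  by (rule transpose_mult[of A "dim_row A" "dim_col A" B "dim_col B"]) (auto intro: carrier_matI)

lemma add_eq_zero_iff_neg:
  assumes "A \<in> carrier_mat n n" "C \<in> carrier_mat n n"
  shows "A + C = 0\<^sub>m n n \<longleftrightarrow> C = - (A :: cmat)"
proof
  assume sum0: "A + C = 0\<^sub>m n n"
  show "C = - A"
  proof (rule eq_matI)
    fix i j assume "i < dim_row (- A)" "j < dim_col (- A)"
    hence ij: "i < n" "j < n" using assms by auto
    have "(A + C) $$ (i,j) = 0" using sum0 ij by simp
    thus "C $$ (i,j) = (- A) $$ (i,j)" using ij assms by (simp add: eq_neg_iff_add_eq_0 add.commute)
  qed (use assms in auto)
qed (rule eq_matI, use assms in auto)

lemma minv_gl:
  assumes g: "g \<in> gl_grp n"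
  shows "minv g \<in> carrier_mat n n" "g * minv g = 1\<^sub>m n" "minv g * g = 1\<^sub>m n"
proof -
  from g have gc: "g \<in> carrier_mat n n" and "invertible_mat g" by (auto simp: gl_grp_def)
  then obtain B where B1: "g * B = 1\<^sub>m n" and B2: "B * g = 1\<^sub>m (dim_row B)"
    by (auto simp: invertible_mat_def inverts_mat_def)
  have "dim_row B = n" using B2 gc by (metis carrier_matD(2) index_mult_mat(3) index_one_mat(3))
  moreover have "dim_col B = n" using B1 by (metis index_mult_mat(3) index_one_mat(3))
  ultimately have "\<exists>h. h \<in> carrier_mat (dim_row g) (dim_row g) \<and> g * h = 1\<^sub>m (dim_row g) \<and> h * g = 1\<^sub>m (dim_row g)"
    using B1 B2 gc by (intro exI[of _ B]) auto
  from someI_ex[OF this] gc show "minv g \<in> carrier_mat n n" "g * minv g = 1\<^sub>m n" "minv g * g = 1\<^sub>m n"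
    unfolding minv_def by auto
qed

lemma right_inverse_gl:
  assumes g: "g \<in> carrier_mat n n" and h: "h \<in> carrier_mat n n" and gh: "g * h = 1\<^sub>m n"
  shows "g \<in> gl_grp n" "minv g = h"
proof -
  have hg: "h * g = 1\<^sub>m n" by (rule mat_mult_left_right_inverse[OF g h gh])
  show G: "g \<in> gl_grp n" using g h gh hg
    by (auto simp: gl_grp_def invertible_mat_def inverts_mat_def intro!: exI[of _ h])
  note m = minv_gl[OF G]
  have "(minv g * g) * h = minv g * (g * h)" by (rule assoc_mult_mat[OF m(1) g h])
  thus "minv g = h" using m gh h by simp
qed

lemma orth_grpD:
  assumes "a \<in> orth_grp m"
  shows "a \<in> carrier_mat m m" "transpose_mat a * a = 1\<^sub>m m" "a * transpose_mat a = 1\<^sub>m m"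
  using assms mat_mult_left_right_inverse[of "transpose_mat a" m a] by (auto simp: orth_grp_def)

lemma one_orth_grp: "1\<^sub>m m \<in> orth_grp m"
  by (simp add: orth_grp_def)

section \<open>The matrices E_{m,n}\<close>

definition row_selector :: "nat \<Rightarrow> nat \<Rightarrow> cmat" where
  "row_selector n m = mat n m (\<lambda>(i,j). if i = j then 1 else 0)"

lemma row_selector_left_inverse:
  assumes A: "A \<in> carrier_mat m n" and nm: "n \<le> m"
    and top: "\<And>i j. i < n \<Longrightarrow> j < n \<Longrightarrow> A $$ (i,j) = (if i = j then 1 else 0)"
  shows "row_selector n m * A = 1\<^sub>m n"
proof (rule eq_matI)
  fix i j assume "i < dim_row (1\<^sub>m n :: cmat)" "j < dim_col (1\<^sub>m n :: cmat)"
  hence ij: "i < n" "j < n" by auto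
  have "(row_selector n m * A) $$ (i,j) = (\<Sum>k\<in>{0..<m}. (if i = k then 1 else 0) * A $$ (k,j))"
    using A ij nm by (simp add: row_selector_def scalar_prod_def)
  also have "\<dots> = (\<Sum>k\<in>{0..<m}. if k = i then A $$ (k,j) else 0)"
    by (rule sum.cong) auto
  also have "\<dots> = A $$ (i,j)" using ij nm by (simp add: sum.delta')
  finally show "(row_selector n m * A) $$ (i,j) = 1\<^sub>m n $$ (i,j)" using top ij by simp
qed (use A in \<open>auto simp: row_selector_def\<close>)

lemma E_mat_carrier[simp]: "E_mat m n \<in> carrier_mat m n"
  and E_mat_dims[simp]: "dim_row (E_mat m n) = m" "dim_col (E_mat m n) = n"
  by (simp_all add: E_mat_def)

lemma E_mat_top_block:
  "i < n \<Longrightarrow> n \<le> m \<Longrightarrow> j < n \<Longrightarrow> E_mat m n $$ (i,j) = (if i = j then 1 else 0)"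
  by (simp add: E_mat_def)

text \<open>The columns of E_{m,n} span a totally isotropic subspace: the contributions
  of the I_n block and of the i I_n block cancel (1 + i^2 = 0).\<close>

lemma E_mat_isotropic:
  assumes "2 * n \<le> m"
  shows "transpose_mat (E_mat m n) * E_mat m n = 0\<^sub>m n n"
proof (rule eq_matI)
  fix i j assume "i < dim_row (0\<^sub>m n n :: cmat)" "j < dim_col (0\<^sub>m n n :: cmat)"
  hence ij: "i < n" "j < n" by auto
  let ?f = "\<lambda>k. E_mat m n $$ (k,i) * E_mat m n $$ (k,j)"
  have "(transpose_mat (E_mat m n) * E_mat m n) $$ (i,j) = (\<Sum>k\<in>{0..<m}. ?f k)"
    using ij by (simp add: scalar_prod_def E_mat_def)
  also have "\<dots> = (\<Sum>k\<in>{0..<n}. ?f k) + (\<Sum>k\<in>{n..<m-n}. ?f k) + (\<Sum>k\<in>{m-n..<m}. ?f k)"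
    using assms by (simp add: sum.atLeastLessThan_concat)
  also have "(\<Sum>k\<in>{0..<n}. ?f k) = (\<Sum>k\<in>{0..<n}. if k = i then (if i = j then 1 else 0) else 0)"
    by (rule sum.cong) (use ij assms in \<open>auto simp: E_mat_def\<close>)
  also have "\<dots> = (if i = j then 1 else 0)" using ij by (simp add: sum.delta')
  also have "(\<Sum>k\<in>{n..<m-n}. ?f k) = 0"
    by (rule sum.neutral) (use ij assms in \<open>auto simp: E_mat_def\<close>)
  also have "(\<Sum>k\<in>{m-n..<m}. ?f k) = (\<Sum>k\<in>{0..<n}. ?f (k + (m-n)))"
    using sum.shift_bounds_nat_ivl[of ?f 0 "m-n" n] assms by simp
  also have "\<dots> = (\<Sum>k\<in>{0..<n}. if k = i then (if i = j then -1 else 0) else 0)"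
    by (rule sum.cong) (use ij assms in \<open>auto simp: E_mat_def\<close>)
  also have "\<dots> = (if i = j then -1 else 0)" using ij by (simp add: sum.delta')
  finally show "(transpose_mat (E_mat m n) * E_mat m n) $$ (i,j) = 0\<^sub>m n n $$ (i,j)"
    using ij by simp
qed (auto simp: E_mat_def)

lemma gram_top_bot_rows:
  assumes A: "A \<in> carrier_mat (q + t) n"
  shows "transpose_mat (top_rows q A) * top_rows q A + transpose_mat (bot_rows t A) * bot_rows t A
     = transpose_mat A * A"
proof (rule eq_matI)
  fix i j assume "i < dim_row (transpose_mat A * A)" "j < dim_col (transpose_mat A * A)"
  hence ij: "i < n" "j < n" using A by auto
  let ?f = "\<lambda>k. A $$ (k,i) * A $$ (k,j)"
  have "(transpose_mat A * A) $$ (i,j) = (\<Sum>k\<in>{0..<q+t}. ?f k)"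
    using ij A by (simp add: scalar_prod_def)
  also have "\<dots> = (\<Sum>k\<in>{0..<q}. ?f k) + (\<Sum>k\<in>{q..<q+t}. ?f k)"
    by (simp add: sum.atLeastLessThan_concat)
  also have "(\<Sum>k\<in>{q..<q+t}. ?f k) = (\<Sum>k\<in>{0..<t}. ?f (k + q))"
    using sum.shift_bounds_nat_ivl[of ?f 0 q t] by (simp add: add.commute)
  finally show "(transpose_mat (top_rows q A) * top_rows q A
      + transpose_mat (bot_rows t A) * bot_rows t A) $$ (i,j) = (transpose_mat A * A) $$ (i,j)"
    using ij A by (simp add: scalar_prod_def top_rows_def bot_rows_def add.commute)
qed (use A in \<open>auto simp: top_rows_def bot_rows_def\<close>)

section \<open>Isotropic frames\<close>

text \<open>An abstract version of the base point: E (p x n) is isotropic with left inverse L,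
  Y (q x n) has left inverse P, and B (t x n) completes Y to an isotropic frame.
  The point y = (E, Y) has phi y = E Y^T and x' = - Y^T Y.\<close>

locale null_frame =
  fixes p q t n :: nat and E Y B L P :: cmat
  assumes dim_E: "dim_row E = p" "dim_col E = n"
    and dim_Y: "dim_row Y = q" "dim_col Y = n"
    and dim_B: "dim_row B = t" "dim_col B = n"
    and dim_L: "dim_row L = n" "dim_col L = p"
    and dim_P: "dim_row P = n" "dim_col P = q"
    and L_E: "L * E = 1\<^sub>m n" and P_Y: "P * Y = 1\<^sub>m n"
    and E_isotropic: "transpose_mat E * E = 0\<^sub>m n n"
    and YB_isotropic: "transpose_mat Y * Y + transpose_mat B * B = 0\<^sub>m n n"
begin

lemmas dims = dim_E dim_Y dim_B dim_L dim_P

lemma Y_transpose_right_inverse: "transpose_mat Y * transpose_mat P = 1\<^sub>m n"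
  using transpose_mult_dim[of P Y] P_Y dims by simp

text \<open>The first identity comes from
  a E = a E Y^T P^T = (a E Y^T b^T)(b P^T) = E (Y^T b P^T).\<close>

lemma stabilizer_restricts:
  assumes a: "a \<in> carrier_mat p p" and b: "b \<in> carrier_mat q q" and bb: "transpose_mat b * b = 1\<^sub>m q"
    and fix_x: "a * (E * transpose_mat Y) * transpose_mat b = E * transpose_mat Y"
  shows "a * E = E * (L * a * E)" "L * a * E * transpose_mat Y * transpose_mat b = transpose_mat Y"
proof -
  note d = dims carrier_matD[OF a] carrier_matD[OF b]
  have "a * E = a * E * (transpose_mat Y * transpose_mat P)"
    using Y_transpose_right_inverse d by simp
  also have "\<dots> = a * (E * transpose_mat Y) * transpose_mat b * (b * transpose_mat P)"
    using d by (simp add: mult_assoc_dim mult_cancel_left_inverse[OF bb])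
  also have "\<dots> = E * (transpose_mat Y * (b * transpose_mat P))"
    unfolding fix_x using d by (simp add: mult_assoc_dim)
  finally have aE: "a * E = E * (transpose_mat Y * (b * transpose_mat P))" .
  moreover have "L * a * E = transpose_mat Y * (b * transpose_mat P)"
    using d by (simp add: mult_assoc_dim aE mult_cancel_left_inverse[OF L_E])
  ultimately show restrict: "a * E = E * (L * a * E)" by simp
  have "E * (L * a * E * transpose_mat Y * transpose_mat b)
      = (E * (L * a * E)) * (transpose_mat Y * transpose_mat b)"
    using d by (simp add: mult_assoc_dim)
  also have "\<dots> = a * (E * transpose_mat Y) * transpose_mat b"
    unfolding restrict[symmetric] using d by (simp add: mult_assoc_dim)
  finally have "E * (L * a * E * transpose_mat Y * transpose_mat b) = E * transpose_mat Y"
    unfolding fix_x .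
  hence "L * (E * (L * a * E * transpose_mat Y * transpose_mat b)) = L * (E * transpose_mat Y)"
    by simp
  thus "L * a * E * transpose_mat Y * transpose_mat b = transpose_mat Y"
    using d by (simp add: mult_cancel_left_inverse[OF L_E])
qed

lemma restriction_mult:
  assumes a1: "a1 \<in> carrier_mat p p" and a2: "a2 \<in> carrier_mat p p"
    and restrict: "a2 * E = E * (L * a2 * E)"
  shows "L * (a1 * a2) * E = (L * a1 * E) * (L * a2 * E)"
proof -
  note d = dims carrier_matD[OF a1] carrier_matD[OF a2]
  have "L * (a1 * a2) * E = L * a1 * (a2 * E)" using d by (simp add: mult_assoc_dim)
  also have "\<dots> = (L * a1 * E) * (L * a2 * E)" unfolding restrict using d by (simp add: mult_assoc_dim)
  finally show ?thesis .
qed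

text \<open>For orthogonal (a, b) fixing E Y^T, the restriction L a E is invertible with inverse
  L a^T E, the restriction of the inverse pair (a^T, b^T), which also fixes E Y^T.\<close>

lemma restriction_invertible:
  assumes a: "a \<in> orth_grp p" and b: "b \<in> orth_grp q"
    and fix_x: "a * (E * transpose_mat Y) * transpose_mat b = E * transpose_mat Y"
  shows "L * a * E \<in> gl_grp n" "minv (L * a * E) = L * transpose_mat a * E"
proof -
  note oa = orth_grpD[OF a] and ob = orth_grpD[OF b]
  note d = dims carrier_matD[OF oa(1)] carrier_matD[OF ob(1)]
  have "transpose_mat a * (a * (E * transpose_mat Y) * transpose_mat b) * b = E * transpose_mat Y"
    using d by (simp add: mult_assoc_dim mult_cancel_left_inverse[OF oa(2)]
        mult_cancel_left_inverse[OF ob(2)] ob(2))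
  hence fix_x_inv: "transpose_mat a * (E * transpose_mat Y) * transpose_mat (transpose_mat b)
      = E * transpose_mat Y"
    unfolding fix_x by simp
  have restrict: "a * E = E * (L * a * E)"
    by (rule stabilizer_restricts(1)[OF oa(1) ob(1) ob(2) fix_x])
  have restrict_inv: "transpose_mat a * E = E * (L * transpose_mat a * E)"
    by (rule stabilizer_restricts(1)[of "transpose_mat a" "transpose_mat b"])
      (use oa ob fix_x_inv in auto)
  have "L * (a * transpose_mat a) * E = (L * a * E) * (L * transpose_mat a * E)"
    by (rule restriction_mult[OF oa(1) _ restrict_inv]) (use oa in simp)
  hence "(L * a * E) * (L * transpose_mat a * E) = 1\<^sub>m n"
    using oa(3) L_E d by simp
  moreover have "L * a * E \<in> carrier_mat n n" "L * transpose_mat a * E \<in> carrier_mat n n"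
    by (rule carrier_matI; simp add: d)+
  ultimately show "L * a * E \<in> gl_grp n" "minv (L * a * E) = L * transpose_mat a * E"
    using right_inverse_gl by blast+
qed

lemma restriction_preserves_form:
  assumes a: "a \<in> orth_grp p" and b: "b \<in> orth_grp q"
    and fix_x: "a * (E * transpose_mat Y) * transpose_mat b = E * transpose_mat Y"
  shows "(L * a * E) * (- (transpose_mat Y * Y)) * transpose_mat (L * a * E) = - (transpose_mat Y * Y)"
proof -
  note oa = orth_grpD[OF a] and ob = orth_grpD[OF b]
  note d = dims carrier_matD[OF oa(1)] carrier_matD[OF ob(1)]
  have "(L * a * E) * (transpose_mat Y * Y) * transpose_mat (L * a * E)
      = (L * a * E * transpose_mat Y * transpose_mat b)
        * transpose_mat (L * a * E * transpose_mat Y * transpose_mat b)"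
    using d by (simp add: mult_assoc_dim transpose_mult_dim mult_cancel_left_inverse[OF ob(2)])
  also have "\<dots> = transpose_mat Y * Y"
    unfolding stabilizer_restricts(2)[OF oa(1) ob(1) ob(2) fix_x] by simp
  finally show ?thesis using d by simp
qed

lemma fibre_in_orbit:
  assumes w: "w \<in> carrier_mat p n" and w1: "w1 \<in> carrier_mat q n"
    and fibre: "w * transpose_mat w1 = E * transpose_mat Y"
  shows "\<exists>g \<in> gl_grp n. w = E * minv g \<and> w1 = Y * transpose_mat g"
proof -
  define c where "c = transpose_mat w1 * transpose_mat P"
  note d = dims carrier_matD[OF w] carrier_matD[OF w1]
  have c: "c \<in> carrier_mat n n" unfolding c_def by (rule carrier_matI) (simp_all add: d)
  note d = d carrier_matD[OF c]
  have "w * c = (w * transpose_mat w1) * transpose_mat P"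
    unfolding c_def using d by (simp add: mult_assoc_dim)
  hence w_c: "w * c = E"
    unfolding fibre using d Y_transpose_right_inverse by (simp add: mult_assoc_dim)
  have Lw: "L * w \<in> carrier_mat n n" by (rule carrier_matI) (simp_all add: d)
  have "(L * w) * c = 1\<^sub>m n" using d w_c L_E by (simp add: mult_assoc_dim)
  hence c_Lw: "c * (L * w) = 1\<^sub>m n" using mat_mult_left_right_inverse[OF Lw c] by simp
  note c_gl = right_inverse_gl[OF c Lw c_Lw]
  have "E * minv c = w * c * (L * w)" unfolding c_gl(2) w_c ..
  also have "\<dots> = w" using d c_Lw by (simp add: mult_assoc_dim c_def)
  finally have w_eq: "w = E * minv c" ..
  have "transpose_mat w1 = c * (L * w) * transpose_mat w1" using c_Lw d by simp
  also have "\<dots> = c * L * (w * transpose_mat w1)" using d c_def by (simp add: mult_assoc_dim)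
  also have "\<dots> = c * transpose_mat Y"
    unfolding fibre using d c_def by (simp add: mult_assoc_dim mult_cancel_left_inverse[OF L_E])
  finally have "w1 = transpose_mat (c * transpose_mat Y)" by (metis transpose_transpose)
  hence "w1 = Y * transpose_mat c" using d c_def by (simp add: transpose_mult_dim)
  thus ?thesis using c_gl w_eq by blast
qed

lemma orbit_in_fibre:
  assumes a: "a \<in> orth_grp p" and b: "b \<in> orth_grp q"
    and fix_x: "a * (E * transpose_mat Y) * transpose_mat b = E * transpose_mat Y"
    and g: "g \<in> gl_grp n"
  shows "a * E * minv g \<in> carrier_mat p n" "b * Y * transpose_mat g \<in> carrier_mat q n"
    "B * transpose_mat g \<in> carrier_mat t n"
    "a * E * minv g * transpose_mat (b * Y * transpose_mat g) = E * transpose_mat Y"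
    "psi (a * E * minv g) = 0\<^sub>m n n"
    "psi (b * Y * transpose_mat g) + psi (B * transpose_mat g) = 0\<^sub>m n n"
proof -
  note oa = orth_grpD[OF a] and ob = orth_grpD[OF b] and mg = minv_gl[OF g]
  have gc: "g \<in> carrier_mat n n" using g by (simp add: gl_grp_def)
  note d = dims carrier_matD[OF oa(1)] carrier_matD[OF ob(1)] carrier_matD[OF mg(1)] carrier_matD[OF gc]
  show "a * E * minv g \<in> carrier_mat p n" "b * Y * transpose_mat g \<in> carrier_mat q n"
    "B * transpose_mat g \<in> carrier_mat t n" by (rule carrier_matI; simp add: d)+
  have "a * (E * (transpose_mat Y * transpose_mat b)) = E * transpose_mat Y"
    using fix_x d by (simp add: mult_assoc_dim)
  thus "a * E * minv g * transpose_mat (b * Y * transpose_mat g) = E * transpose_mat Y"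
    using d by (simp add: mult_assoc_dim transpose_mult_dim mult_cancel_left_inverse[OF mg(3)])
  have "transpose_mat E * (E * X) = 0\<^sub>m n (dim_col X)" if "dim_row X = n" for X
  proof -
    have "transpose_mat E * (E * X) = (transpose_mat E * E) * X"
      using that d by (simp add: mult_assoc_dim)
    thus ?thesis unfolding E_isotropic using that by simp
  qed
  thus "psi (a * E * minv g) = 0\<^sub>m n n"
    unfolding psi_def using d by (simp add: mult_assoc_dim transpose_mult_dim mult_cancel_left_inverse[OF oa(2)])
  have YgBg: "transpose_mat Y * Y * transpose_mat g \<in> carrier_mat n n"
    "transpose_mat B * B * transpose_mat g \<in> carrier_mat n n"
    by (rule carrier_matI; simp add: d)+
  have "psi (b * Y * transpose_mat g) + psi (B * transpose_mat g)
     = g * (transpose_mat Y * Y * transpose_mat g) + g * (transpose_mat B * B * transpose_mat g)"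
    unfolding psi_def using d by (simp add: mult_assoc_dim transpose_mult_dim mult_cancel_left_inverse[OF ob(2)])
  also have "\<dots> = g * (transpose_mat Y * Y * transpose_mat g + transpose_mat B * B * transpose_mat g)"
    by (rule mult_add_distrib_mat[OF gc YgBg, symmetric])
  also have "\<dots> = g * ((transpose_mat Y * Y + transpose_mat B * B) * transpose_mat g)"
    by (subst add_mult_distrib_mat[of _ n n]) (auto intro!: carrier_matI simp: d)
  also have "\<dots> = 0\<^sub>m n n" unfolding YB_isotropic using d by simp
  finally show "psi (b * Y * transpose_mat g) + psi (B * transpose_mat g) = 0\<^sub>m n n" .
qed

lemma stabilizer_is_graph:
  assumes a: "a \<in> orth_grp p" and b: "b \<in> orth_grp q" and g: "g \<in> gl_grp n"
    and fix_E: "a * E * minv g = E" and fix_Y: "b * Y * transpose_mat g = Y"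
  shows "a * (E * transpose_mat Y) * transpose_mat b = E * transpose_mat Y" "g = L * a * E"
proof -
  note oa = orth_grpD[OF a] and ob = orth_grpD[OF b] and mg = minv_gl[OF g]
  have gc: "g \<in> carrier_mat n n" using g by (simp add: gl_grp_def)
  note d = dims carrier_matD[OF oa(1)] carrier_matD[OF ob(1)] carrier_matD[OF mg(1)] carrier_matD[OF gc]
  have "a * E = a * E * minv g * g" using d mg(3) by (simp add: mult_assoc_dim)
  hence aE: "a * E = E * g" unfolding fix_E .
  thus "g = L * a * E" using d by (simp add: mult_assoc_dim mult_cancel_left_inverse[OF L_E])
  have "transpose_mat Y = transpose_mat (b * Y * transpose_mat g)" unfolding fix_Y ..
  hence "g * (transpose_mat Y * transpose_mat b) = transpose_mat Y"
    using d by (simp add: transpose_mult_dim mult_assoc_dim)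
  hence "(a * E) * (transpose_mat Y * transpose_mat b) = E * transpose_mat Y"
    unfolding aE using d by (simp add: mult_assoc_dim)
  thus "a * (E * transpose_mat Y) * transpose_mat b = E * transpose_mat Y"
    using d by (simp add: mult_assoc_dim)
qed

lemma graph_stabilizes:
  assumes a: "a \<in> orth_grp p" and b: "b \<in> orth_grp q"
    and fix_x: "a * (E * transpose_mat Y) * transpose_mat b = E * transpose_mat Y"
  shows "a * E * minv (L * a * E) = E" "b * Y * transpose_mat (L * a * E) = Y"
proof -
  note oa = orth_grpD[OF a] and ob = orth_grpD[OF b]
  note mg = minv_gl[OF restriction_invertible(1)[OF a b fix_x]]
  note restrict = stabilizer_restricts[OF oa(1) ob(1) ob(2) fix_x]
  note d = dims carrier_matD[OF oa(1)] carrier_matD[OF ob(1)] carrier_matD[OF mg(1)]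
  have "a * E * minv (L * a * E) = E * (L * a * E) * minv (L * a * E)" unfolding restrict(1) ..
  also have "\<dots> = E" using d mg(2) by (simp add: mult_assoc_dim)
  finally show "a * E * minv (L * a * E) = E" .
  have "b * Y * transpose_mat (L * a * E) = transpose_mat (L * a * E * transpose_mat Y * transpose_mat b)"
    using d by (simp add: transpose_mult_dim mult_assoc_dim)
  also have "\<dots> = Y" unfolding restrict(2) by simp
  finally show "b * Y * transpose_mat (L * a * E) = Y" .
qed

end

section \<open>The base point z0\<close>

text \<open>The standing dimension hypotheses of the lemma.\<close>

locale base_point =
  fixes p q t n :: nat
  assumes p_large: "2 * n \<le> p" and qt_large: "2 * n \<le> q + t" and q_large: "n \<le> q"

text \<open>The homomorphism beta: restriction of the O(p)-component to the column space of E_{p,n}.\<close>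

definition beta_map :: "nat \<Rightarrow> nat \<Rightarrow> cmat \<times> cmat \<Rightarrow> cmat" where
  "beta_map p n k = row_selector n p * fst k * E_mat p n"

context base_point
begin

abbreviation Y0 :: cmat where "Y0 \<equiv> top_rows q (E_mat (q + t) n)"
abbreviation B0 :: cmat where "B0 \<equiv> bot_rows t (E_mat (q + t) n)"

lemma Y0_carrier: "Y0 \<in> carrier_mat q n" and B0_carrier: "B0 \<in> carrier_mat t n"
  by (auto simp: top_rows_def bot_rows_def)

text \<open>z0 is an isotropic frame; the left inverse of Y0 uses q \<ge> n.\<close>

lemma z0_null_frame:
  "null_frame p q t n (E_mat p n) Y0 B0 (row_selector n p) (row_selector n q)"
proof
  show "row_selector n p * E_mat p n = 1\<^sub>m n"
    by (rule row_selector_left_inverse[OF E_mat_carrier]) (use p_large in \<open>auto simp: E_mat_top_block\<close>)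
  show "row_selector n q * Y0 = 1\<^sub>m n"
    by (rule row_selector_left_inverse[OF Y0_carrier])
      (use qt_large q_large in \<open>auto simp: top_rows_def E_mat_top_block\<close>)
  show "transpose_mat (E_mat p n) * E_mat p n = 0\<^sub>m n n"
    by (rule E_mat_isotropic[OF p_large])
  show "transpose_mat Y0 * Y0 + transpose_mat B0 * B0 = 0\<^sub>m n n"
    unfolding gram_top_bot_rows[OF E_mat_carrier] by (rule E_mat_isotropic[OF qt_large])
qed (use Y0_carrier B0_carrier in \<open>auto simp: row_selector_def\<close>)

sublocale null_frame p q t n "E_mat p n" Y0 B0 "row_selector n p" "row_selector n q"
  by (rule z0_null_frame)

lemma y_pt_eq: "y_pt p q t n = (E_mat p n, Y0)"
  by (simp add: y_pt_def z0_def pr_def)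

lemma x_pt_eq: "x_pt p q t n = E_mat p n * transpose_mat Y0"
  by (simp add: x_pt_def y_pt_eq phi_def)

lemma x'_pt_eq: "x'_pt p q t n = - (transpose_mat Y0 * Y0)"
  by (simp add: x'_pt_def y_pt_eq psi_def)

lemma K_x_iff:
  "k \<in> K_x p q t n \<longleftrightarrow> fst k \<in> orth_grp p \<and> snd k \<in> orth_grp q \<and>
     fst k * (E_mat p n * transpose_mat Y0) * transpose_mat (snd k) = E_mat p n * transpose_mat Y0"
  by (cases k) (simp add: K_x_def K_grp_def x_pt_eq)

lemma Y_set_orbit:
  "Y_set p q t n = {act_W (k, g) (y_pt p q t n) | k g. k \<in> K_x p q t n \<and> g \<in> gl_grp n}"
proof (intro equalityI subsetI)
  fix w assume "w \<in> Y_set p q t n"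
  then obtain wp w1 where w: "w = (wp, w1)" "wp \<in> carrier_mat p n" "w1 \<in> carrier_mat q n"
    and fibre: "wp * transpose_mat w1 = E_mat p n * transpose_mat Y0"
    by (auto simp: Y_set_def W_sp_def phi_def x_pt_eq)
  obtain g where g: "g \<in> gl_grp n"
    and "wp = E_mat p n * minv g" "w1 = Y0 * transpose_mat g"
    using fibre_in_orbit[OF w(2,3) fibre] by blast
  hence "w = act_W ((1\<^sub>m p, 1\<^sub>m q), g) (y_pt p q t n)"
    using w(1) Y0_carrier by (simp add: act_W_def y_pt_eq)
  moreover have "(1\<^sub>m p, 1\<^sub>m q) \<in> K_x p q t n"
    using Y0_carrier by (simp add: K_x_iff one_orth_grp)
  ultimately show "w \<in> {act_W (k, g) (y_pt p q t n) | k g. k \<in> K_x p q t n \<and> g \<in> gl_grp n}"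
    using g by blast
next
  fix w assume "w \<in> {act_W (k, g) (y_pt p q t n) | k g. k \<in> K_x p q t n \<and> g \<in> gl_grp n}"
  then obtain a b g where k: "(a, b) \<in> K_x p q t n" and g: "g \<in> gl_grp n"
    and w: "w = (a * E_mat p n * minv g, b * Y0 * transpose_mat g)"
    by (force simp: act_W_def y_pt_eq)
  note fibre = orbit_in_fibre[OF _ _ _ g, of a b] k[unfolded K_x_iff, simplified]
  have "(a * E_mat p n * minv g, b * Y0 * transpose_mat g, B0 * transpose_mat g) \<in> null_cone p q t n"
    using fibre by (simp add: null_cone_def WH_sp_def)
  hence "w \<in> pr ` null_cone p q t n" unfolding w by (force simp: pr_def)
  thus "w \<in> Y_set p q t n" using fibre by (simp add: Y_set_def W_sp_def w phi_def x_pt_eq)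
qed

lemma beta_in_K'_x': "k \<in> K_x p q t n \<Longrightarrow> beta_map p n k \<in> K'_x' p q t n"
  unfolding K_x_iff K'_x'_def x'_pt_eq beta_map_def
  using restriction_invertible(1) restriction_preserves_form by auto

lemma beta_mult:
  assumes "k1 \<in> K_x p q t n" "k2 \<in> K_x p q t n"
  shows "beta_map p n (fst k1 * fst k2, snd k1 * snd k2) = beta_map p n k1 * beta_map p n k2"
proof -
  have a1: "fst k1 \<in> orth_grp p" and a2: "fst k2 \<in> orth_grp p" and b2: "snd k2 \<in> orth_grp q"
    and fix_x: "fst k2 * (E_mat p n * transpose_mat Y0) * transpose_mat (snd k2) = E_mat p n * transpose_mat Y0"
    using assms unfolding K_x_iff by auto
  note ob = orth_grpD[OF b2]
  show ?thesis unfolding beta_map_def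
    using restriction_mult[OF orth_grpD(1)[OF a1] orth_grpD(1)[OF a2]
        stabilizer_restricts(1)[OF orth_grpD(1)[OF a2] ob(1) ob(2) fix_x]]
    by simp
qed

lemma S_y_graph: "S_y p q t n = {(k, beta_map p n k) | k. k \<in> K_x p q t n}"
proof (intro equalityI subsetI)
  fix kg assume "kg \<in> S_y p q t n"
  then obtain a b g where kg: "kg = ((a, b), g)" and a: "a \<in> orth_grp p" and b: "b \<in> orth_grp q"
    and g: "g \<in> gl_grp n" and "act_W ((a, b), g) (E_mat p n, Y0) = (E_mat p n, Y0)"
    unfolding S_y_def K_grp_def y_pt_eq by force
  hence "a * E_mat p n * minv g = E_mat p n" "b * Y0 * transpose_mat g = Y0"
    by (auto simp: act_W_def)
  note graph = stabilizer_is_graph[OF a b g this]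
  have "(a, b) \<in> K_x p q t n" unfolding K_x_iff using a b graph(1) by simp
  thus "kg \<in> {(k, beta_map p n k) | k. k \<in> K_x p q t n}"
    unfolding kg beta_map_def using graph(2) by force
next
  fix kg assume "kg \<in> {(k, beta_map p n k) | k. k \<in> K_x p q t n}"
  then obtain a b where kg: "kg = ((a, b), beta_map p n (a, b))" and "(a, b) \<in> K_x p q t n"
    by force
  hence a: "a \<in> orth_grp p" and b: "b \<in> orth_grp q"
    and fix_x: "a * (E_mat p n * transpose_mat Y0) * transpose_mat b = E_mat p n * transpose_mat Y0"
    unfolding K_x_iff by auto
  show "kg \<in> S_y p q t n"
    unfolding kg S_y_def K_grp_def y_pt_eq beta_map_def act_W_def
    using a b restriction_invertible(1)[OF a b fix_x] graph_stabilizes[OF a b fix_x] by simp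
qed

lemma Z_y_iff:
  "z \<in> Z_y p q t n \<longleftrightarrow> (\<exists>w2. z = (E_mat p n, Y0, w2) \<and> w2 \<in> Z_x' p q t n)"
proof -
  have "psi Y0 + psi w2 = 0\<^sub>m n n \<longleftrightarrow> psi w2 = - (transpose_mat Y0 * Y0)"
    if "w2 \<in> carrier_mat t n" for w2
    unfolding psi_def by (rule add_eq_zero_iff_neg) (use that Y0_carrier in auto)
  moreover have "psi (E_mat p n) = 0\<^sub>m n n" using E_isotropic by (simp add: psi_def)
  ultimately show ?thesis
    unfolding Z_y_def Z_set_def null_cone_def WH_sp_def Z_x'_def x'_pt_eq y_pt_eq
    using Y0_carrier by (cases z) (auto simp: pr_def phi_def x_pt_eq)
qed

lemma projection_bij: "bij_betw (\<lambda>z. snd (snd z)) (Z_y p q t n) (Z_x' p q t n)"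
proof (rule bij_betw_imageI)
  show "inj_on (\<lambda>z. snd (snd z)) (Z_y p q t n)" by (auto simp: inj_on_def Z_y_iff)
  show "(\<lambda>z. snd (snd z)) ` Z_y p q t n = Z_x' p q t n"
    by (force simp: Z_y_iff)
qed

lemma projection_equivariant:
  assumes "z \<in> Z_y p q t n"
  shows "snd (snd (act_WH (a, b, ot, g) z)) = ot * snd (snd z) * transpose_mat g"
  using assms by (auto simp: Z_y_iff act_WH_def)

end

theorem lemma5p3:
  fixes p q t n :: nat
  assumes "even (p + q + t)"
    and "min p (q + t) \<ge> 2 * n"
    and "max p (q + t) > 2 * n"
    and "q \<ge> n"
  shows
    "Y_set p q t n = {act_W (k, g) (y_pt p q t n) | k g. k \<in> K_x p q t n \<and> g \<in> gl_grp n}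
     \<and> (\<exists>\<beta>. (\<forall>k \<in> K_x p q t n. \<beta> k \<in> K'_x' p q t n)
          \<and> (\<forall>k1 \<in> K_x p q t n. \<forall>k2 \<in> K_x p q t n.
                \<beta> (fst k1 * fst k2, snd k1 * snd k2) = \<beta> k1 * \<beta> k2)
          \<and> S_y p q t n = {(k, \<beta> k) | k. k \<in> K_x p q t n}
          \<and> (\<exists>T. bij_betw T (Z_y p q t n) (Z_x' p q t n)
               \<and> (\<forall>z \<in> Z_y p q t n. \<forall>ot \<in> orth_grp t.
                     T (act_WH (1\<^sub>m p, 1\<^sub>m q, ot, 1\<^sub>m n) z) = ot * T z)
               \<and> (\<forall>z \<in> Z_y p q t n. \<forall>k \<in> K_x p q t n.
                     T (act_WH (fst k, snd k, 1\<^sub>m t, \<beta> k) z) = T z * transpose_mat (\<beta> k))))"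
proof -
  interpret base_point p q t n
    using assms(2,4) by unfold_locales auto
  have T_Kt: "snd (snd (act_WH (1\<^sub>m p, 1\<^sub>m q, ot, 1\<^sub>m n) z)) = ot * snd (snd z)"
    if "z \<in> Z_y p q t n" "ot \<in> orth_grp t" for z ot
    using projection_equivariant[OF that(1)] that by (auto simp: Z_y_iff Z_x'_def orth_grp_def)
  have T_Kx: "snd (snd (act_WH (fst k, snd k, 1\<^sub>m t, beta_map p n k) z))
      = snd (snd z) * transpose_mat (beta_map p n k)" if "z \<in> Z_y p q t n" for z k
    using projection_equivariant[OF that] that by (auto simp: Z_y_iff Z_x'_def)
  show ?thesis
    using Y_set_orbit beta_in_K'_x' beta_mult S_y_graph projection_bij T_Kt T_Kx
    by (intro conjI exI[of _ "beta_map p n"] exI[of _ "\<lambda>z. snd (snd z)"]) auto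
qed

end
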